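(* Let $P:\mathcal{C}^{\mathrm{op}}\to\mathbf{Pos}$ be a universal slat-doctrine such that $\mathcal{C}$ has exponents, and consider its existential completion $P^{ex}$, with left adjoints $\exists^{ex}$ and right adjoints $\forall^{ex}$ along product projections. For all objects $A_1,A_2,B$ of $\mathcal{C}$ and every $\alpha\in P(A_1\times A_2\times B)$, $$\forall^{ex}_{\mathrm{pr}_1}\,\exists^{ex}_{\langle\mathrm{pr}_1,\mathrm{pr}_2\rangle}\,\eta_{A_1\times A_2\times B}(\alpha)=\exists^{ex}_{\mathrm{pr}'_1}\,\forall^{ex}_{\langle\mathrm{pr}_1,\mathrm{pr}_3\rangle}\,\eta_{A_1\times A_2\times B^{A_2}}\,P_{\langle\mathrm{pr}_1,\mathrm{pr}_2,\mathrm{ev}\langle\mathrm{pr}_2,\mathrm{pr}_3\rangle\rangle}(\alpha)$$ in $P^{ex}(A_1)$, where: on the left, $\langle\mathrm{pr}_1,\mathrm{pr}_2\rangle:A_1\times A_2\times B\to A_1\times A_2$ and $\mathrm{pr}_1:A_1\times A_2\to A_1$; on the right, $\mathrm{pr}_i$ are the projections of $A_1\times A_2\times B^{A_2}$, $\mathrm{ev}:A_2\times B^{A_2}\to B$ is evaluation, $\langle\mathrm{pr}_1,\mathrm{pr}_3\rangle:A_1\times A_2\times B^{A_2}\to A_1\times B^{A_2}$, and $\mathrm{pr}'_1:A_1\times B^{A_2}\to A_1$.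
   Context: A slat-doctrine is a functor $P:\mathcal{C}^{\mathrm{op}}\to\mathbf{Pos}$ with $\mathcal{C}$ having finite products; $P_f:P(Y)\to P(X)$ is reindexing along $f:X\to Y$. It is existential (resp. universal) if each $P_{\mathrm{pr}_i}:P(A_i)\to P(A_1\times A_2)$ along a product projection has a left adjoint $\exists_{\mathrm{pr}_i}$ (resp. right adjoint $\forall_{\mathrm{pr}_i}$) satisfying Beck–Chevalley: for every pullback of a projection $\mathrm{pr}:X\to A$ along $f:A'\to A$, with resulting projection $\mathrm{pr}':X'\to A'$ and $f':X'\to X$, $\exists_{\mathrm{pr}'}P_{f'}=P_f\exists_{\mathrm{pr}}$ (resp. with $\forall$). Existential completion: $P^{ex}(A)$ is the poset (reflection of the preorder) of triples $(A,B,\alpha)$ with $\alpha\in P(A\times B)$, where $(A,B,\alpha)\le(A,C,\beta)$ iff there is $f:A\times B\to C$ with $\alpha\le P_{\langle\mathrm{pr}_A,f\rangle}(\beta)$; for $f:A\to C$, $P^{ex}_f(C,D,\gamma)=(A,D,P_{f\times 1_D}(\gamma))$. $P^{ex}$ is existential, with $\exists^{ex}_{\mathrm{pr}_1}(A_1\times A_2,B,\beta)=(A_1,A_2\times B,\beta)$, and when $P$ is universal and $\mathcal{C}$ has exponents, $P^{ex}$ is also universal; $\forall^{ex}$ denotes its (unique) right adjoints to reindexing along projections. The map $\eta_A:P(A)\to P^{ex}(A)$ sends $\alpha$ to $(A,1,P_{\mathrm{pr}_A}(\alpha))$, with $\mathrm{pr}_A:A\times 1\to A$. *)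

theory Defs
  imports Main
begin

text \<open>Composition c_comp g f is g after f.
  c_prod A B is a chosen product with projections c_p1 A B, c_p2 A B and pairing c_pair;
  c_term is a terminal object; c_exp A B is the exponent B^A with evaluation
  c_ev A B : A x B^A -> B.\<close>

record ('o, 'm) cat =
  c_dom  :: "'m \<Rightarrow> 'o"
  c_cod  :: "'m \<Rightarrow> 'o"
  c_comp :: "'m \<Rightarrow> 'm \<Rightarrow> 'm"
  c_id   :: "'o \<Rightarrow> 'm"
  c_prod :: "'o \<Rightarrow> 'o \<Rightarrow> 'o"
  c_p1   :: "'o \<Rightarrow> 'o \<Rightarrow> 'm"
  c_p2   :: "'o \<Rightarrow> 'o \<Rightarrow> 'm"
  c_pair :: "'m \<Rightarrow> 'm \<Rightarrow> 'm"
  c_term :: "'o"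
  c_bang :: "'o \<Rightarrow> 'm"
  c_exp  :: "'o \<Rightarrow> 'o \<Rightarrow> 'o"
  c_ev   :: "'o \<Rightarrow> 'o \<Rightarrow> 'm"

definition is_category :: "('o, 'm) cat \<Rightarrow> bool" where
  "is_category C \<longleftrightarrow>
     (\<forall>A. c_dom C (c_id C A) = A \<and> c_cod C (c_id C A) = A) \<and>
     (\<forall>f g. c_cod C f = c_dom C g \<longrightarrow>
        c_dom C (c_comp C g f) = c_dom C f \<and> c_cod C (c_comp C g f) = c_cod C g) \<and>
     (\<forall>f. c_comp C (c_id C (c_cod C f)) f = f \<and> c_comp C f (c_id C (c_dom C f)) = f) \<and>
     (\<forall>f g h. c_cod C f = c_dom C g \<and> c_cod C g = c_dom C h \<longrightarrow>
        c_comp C h (c_comp C g f) = c_comp C (c_comp C h g) f)"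

definition has_finite_products :: "('o, 'm) cat \<Rightarrow> bool" where
  "has_finite_products C \<longleftrightarrow>
     (\<forall>A B. c_dom C (c_p1 C A B) = c_prod C A B \<and> c_cod C (c_p1 C A B) = A \<and>
            c_dom C (c_p2 C A B) = c_prod C A B \<and> c_cod C (c_p2 C A B) = B) \<and>
     (\<forall>f g. c_dom C f = c_dom C g \<longrightarrow>
        c_dom C (c_pair C f g) = c_dom C f \<and>
        c_cod C (c_pair C f g) = c_prod C (c_cod C f) (c_cod C g) \<and>
        c_comp C (c_p1 C (c_cod C f) (c_cod C g)) (c_pair C f g) = f \<and>
        c_comp C (c_p2 C (c_cod C f) (c_cod C g)) (c_pair C f g) = g) \<and>
     (\<forall>h A B. c_cod C h = c_prod C A B \<longrightarrow>
        c_pair C (c_comp C (c_p1 C A B) h) (c_comp C (c_p2 C A B) h) = h) \<and>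
     (\<forall>A. c_dom C (c_bang C A) = A \<and> c_cod C (c_bang C A) = c_term C) \<and>
     (\<forall>f. c_cod C f = c_term C \<longrightarrow> f = c_bang C (c_dom C f))"

definition has_exponents :: "('o, 'm) cat \<Rightarrow> bool" where
  "has_exponents C \<longleftrightarrow>
     (\<forall>A B. c_dom C (c_ev C A B) = c_prod C A (c_exp C A B) \<and> c_cod C (c_ev C A B) = B) \<and>
     (\<forall>A B X h. c_dom C h = c_prod C A X \<and> c_cod C h = B \<longrightarrow>
        (\<exists>!k. c_dom C k = X \<and> c_cod C k = c_exp C A B \<and>
              c_comp C (c_ev C A B)
                (c_pair C (c_p1 C A X) (c_comp C k (c_p2 C A X))) = h))"

definition cross_r :: "('o, 'm) cat \<Rightarrow> 'm \<Rightarrow> 'o \<Rightarrow> 'm" where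
  "cross_r C f D = c_pair C (c_comp C f (c_p1 C (c_dom C f) D)) (c_p2 C (c_dom C f) D)"

definition cross_l :: "('o, 'm) cat \<Rightarrow> 'o \<Rightarrow> 'm \<Rightarrow> 'm" where
  "cross_l C D f = c_pair C (c_p1 C D (c_dom C f)) (c_comp C f (c_p2 C D (c_dom C f)))"

record ('o, 'm, 'p) doctr =
  Pc  :: "'o \<Rightarrow> 'p set"
  ple :: "'o \<Rightarrow> 'p \<Rightarrow> 'p \<Rightarrow> bool"
  pre :: "'m \<Rightarrow> 'p \<Rightarrow> 'p"            (* reindexing P_f : P(cod f) -> P(dom f) *)

definition doctrine :: "('o, 'm) cat \<Rightarrow> ('o, 'm, 'p) doctr \<Rightarrow> bool" where
  "doctrine C P \<longleftrightarrow>
     (\<forall>A. \<forall>x\<in>Pc P A. ple P A x x) \<and>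
     (\<forall>A. \<forall>x\<in>Pc P A. \<forall>y\<in>Pc P A. \<forall>z\<in>Pc P A. ple P A x y \<and> ple P A y z \<longrightarrow> ple P A x z) \<and>
     (\<forall>A. \<forall>x\<in>Pc P A. \<forall>y\<in>Pc P A. ple P A x y \<and> ple P A y x \<longrightarrow> x = y) \<and>
     (\<forall>f. \<forall>x\<in>Pc P (c_cod C f). pre P f x \<in> Pc P (c_dom C f)) \<and>
     (\<forall>f. \<forall>x\<in>Pc P (c_cod C f). \<forall>y\<in>Pc P (c_cod C f).
          ple P (c_cod C f) x y \<longrightarrow> ple P (c_dom C f) (pre P f x) (pre P f y)) \<and>
     (\<forall>A. \<forall>x\<in>Pc P A. pre P (c_id C A) x = x) \<and>
     (\<forall>f g. c_cod C f = c_dom C g \<longrightarrow>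
        (\<forall>x\<in>Pc P (c_cod C g). pre P (c_comp C g f) x = pre P f (pre P g x)))"

definition P_radj :: "('o, 'm) cat \<Rightarrow> ('o, 'm, 'p) doctr \<Rightarrow> 'm \<Rightarrow> 'p \<Rightarrow> 'p \<Rightarrow> bool" where
  "P_radj C P m \<beta> \<gamma> \<longleftrightarrow> \<gamma> \<in> Pc P (c_cod C m) \<and>
     (\<forall>\<delta>\<in>Pc P (c_cod C m). ple P (c_cod C m) \<delta> \<gamma> \<longleftrightarrow> ple P (c_dom C m) (pre P m \<delta>) \<beta>)"

definition P_forall :: "('o, 'm) cat \<Rightarrow> ('o, 'm, 'p) doctr \<Rightarrow> 'm \<Rightarrow> 'p \<Rightarrow> 'p" where
  "P_forall C P m \<beta> = (SOME \<gamma>. P_radj C P m \<beta> \<gamma>)"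

definition universal :: "('o, 'm) cat \<Rightarrow> ('o, 'm, 'p) doctr \<Rightarrow> bool" where
  "universal C P \<longleftrightarrow>
     (\<forall>A D. \<forall>\<beta>\<in>Pc P (c_prod C A D).
        (\<exists>\<gamma>. P_radj C P (c_p1 C A D) \<beta> \<gamma>) \<and> (\<exists>\<gamma>. P_radj C P (c_p2 C A D) \<beta> \<gamma>)) \<and>
     (\<forall>f D. \<forall>\<beta>\<in>Pc P (c_prod C (c_cod C f) D).
        pre P f (P_forall C P (c_p1 C (c_cod C f) D) \<beta>) =
        P_forall C P (c_p1 C (c_dom C f) D) (pre P (cross_r C f D) \<beta>)) \<and>
     (\<forall>f D. \<forall>\<beta>\<in>Pc P (c_prod C D (c_cod C f)).
        pre P f (P_forall C P (c_p2 C D (c_cod C f)) \<beta>) =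
        P_forall C P (c_p2 C D (c_dom C f)) (pre P (cross_l C D f) \<beta>))"

text \<open>An element (D, alpha) of P^ex(A) represents the triple (A, D, alpha), alpha in P(A x D).
  P^ex(A) is the poset reflection of the preorder ex_le; equality in P^ex(A) is
  mutual ex_le.\<close>

definition ex_carrier :: "('o, 'm) cat \<Rightarrow> ('o, 'm, 'p) doctr \<Rightarrow> 'o \<Rightarrow> ('o \<times> 'p) set" where
  "ex_carrier C P A = {(D, \<alpha>). \<alpha> \<in> Pc P (c_prod C A D)}"

definition ex_le :: "('o, 'm) cat \<Rightarrow> ('o, 'm, 'p) doctr \<Rightarrow> 'o \<Rightarrow> 'o \<times> 'p \<Rightarrow> 'o \<times> 'p \<Rightarrow> bool" where
  "ex_le C P A x y \<longleftrightarrow>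
     (\<exists>h. c_dom C h = c_prod C A (fst x) \<and> c_cod C h = fst y \<and>
          ple P (c_prod C A (fst x)) (snd x) (pre P (c_pair C (c_p1 C A (fst x)) h) (snd y)))"

definition ex_eq :: "('o, 'm) cat \<Rightarrow> ('o, 'm, 'p) doctr \<Rightarrow> 'o \<Rightarrow> 'o \<times> 'p \<Rightarrow> 'o \<times> 'p \<Rightarrow> bool" where
  "ex_eq C P A x y \<longleftrightarrow> ex_le C P A x y \<and> ex_le C P A y x"

definition ex_re :: "('o, 'm) cat \<Rightarrow> ('o, 'm, 'p) doctr \<Rightarrow> 'm \<Rightarrow> 'o \<times> 'p \<Rightarrow> 'o \<times> 'p" where
  "ex_re C P f x = (fst x, pre P (cross_r C f (fst x)) (snd x))"

text \<open>Left / right adjoints to P^ex_m (values chosen among representatives).\<close>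

definition ex_exists :: "('o, 'm) cat \<Rightarrow> ('o, 'm, 'p) doctr \<Rightarrow> 'm \<Rightarrow> 'o \<times> 'p \<Rightarrow> 'o \<times> 'p" where
  "ex_exists C P m x = (SOME y. y \<in> ex_carrier C P (c_cod C m) \<and>
     (\<forall>z\<in>ex_carrier C P (c_cod C m).
        ex_le C P (c_cod C m) y z \<longleftrightarrow> ex_le C P (c_dom C m) x (ex_re C P m z)))"

definition ex_forall :: "('o, 'm) cat \<Rightarrow> ('o, 'm, 'p) doctr \<Rightarrow> 'm \<Rightarrow> 'o \<times> 'p \<Rightarrow> 'o \<times> 'p" where
  "ex_forall C P m x = (SOME y. y \<in> ex_carrier C P (c_cod C m) \<and>
     (\<forall>z\<in>ex_carrier C P (c_cod C m).
        ex_le C P (c_cod C m) z y \<longleftrightarrow> ex_le C P (c_dom C m) (ex_re C P m z) x))"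

definition ex_eta :: "('o, 'm) cat \<Rightarrow> ('o, 'm, 'p) doctr \<Rightarrow> 'o \<Rightarrow> 'p \<Rightarrow> 'o \<times> 'p" where
  "ex_eta C P A \<alpha> = (c_term C, pre P (c_p1 C A (c_term C)) \<alpha>)"

end

theory Submission
  imports Defs
begin

(* Both sides equal the triple (A1, B^A2, \<Phi>) with \<Phi>(a1, f) = \<forall>a2. \<alpha>(a1, a2, f a2).
   On the left, \<exists>^ex over B of \<eta>(\<alpha>) is just the triple (A1 \<times> A2, B, \<alpha>), and \<forall>^ex over A2 of
   such a triple is computed by Skolemisation: a witness h(a1, a2, d) in B is, after exponential
   transposition, the same thing as a witness k(a1, d) in B^A2.  On the right, \<eta> commutes with the
   universal quantifier, so the inner term is \<eta>(\<Phi>), and \<exists>^ex over B^A2 of \<eta>(\<Phi>) is again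
   (A1, B^A2, \<Phi>). *)

locale cartesian_category =
  fixes C :: "('o, 'm) cat"
  assumes is_category: "is_category C"
    and has_finite_products: "has_finite_products C"
begin

abbreviation dom\<^sub>C :: "'m \<Rightarrow> 'o" where "dom\<^sub>C \<equiv> c_dom C"
abbreviation cod\<^sub>C :: "'m \<Rightarrow> 'o" where "cod\<^sub>C \<equiv> c_cod C"
abbreviation comp :: "'m \<Rightarrow> 'm \<Rightarrow> 'm" (infixr "\<cdot>" 55) where "g \<cdot> f \<equiv> c_comp C g f"
abbreviation prod :: "'o \<Rightarrow> 'o \<Rightarrow> 'o" (infixl "\<otimes>" 70) where "A \<otimes> B \<equiv> c_prod C A B"
abbreviation pair :: "'m \<Rightarrow> 'm \<Rightarrow> 'm" ("\<langle>_, _\<rangle>") where "\<langle>f, g\<rangle> \<equiv> c_pair C f g"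
abbreviation \<pi>\<^sub>1 :: "'o \<Rightarrow> 'o \<Rightarrow> 'm" where "\<pi>\<^sub>1 \<equiv> c_p1 C"
abbreviation \<pi>\<^sub>2 :: "'o \<Rightarrow> 'o \<Rightarrow> 'm" where "\<pi>\<^sub>2 \<equiv> c_p2 C"

lemma dom_id [simp]: "dom\<^sub>C (c_id C A) = A"
  and cod_id [simp]: "cod\<^sub>C (c_id C A) = A"
  and dom_comp [simp]: "cod\<^sub>C f = dom\<^sub>C g \<Longrightarrow> dom\<^sub>C (g \<cdot> f) = dom\<^sub>C f"
  and cod_comp [simp]: "cod\<^sub>C f = dom\<^sub>C g \<Longrightarrow> cod\<^sub>C (g \<cdot> f) = cod\<^sub>C g"
  and comp_id [simp]: "dom\<^sub>C f = A \<Longrightarrow> f \<cdot> c_id C A = f"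
  and comp_assoc [simp]: "cod\<^sub>C f = dom\<^sub>C g \<Longrightarrow> cod\<^sub>C g = dom\<^sub>C h \<Longrightarrow> (h \<cdot> g) \<cdot> f = h \<cdot> g \<cdot> f"
  using is_category unfolding is_category_def by auto

lemma dom_p1 [simp]: "dom\<^sub>C (\<pi>\<^sub>1 A B) = A \<otimes> B"
  and cod_p1 [simp]: "cod\<^sub>C (\<pi>\<^sub>1 A B) = A"
  and dom_p2 [simp]: "dom\<^sub>C (\<pi>\<^sub>2 A B) = A \<otimes> B"
  and cod_p2 [simp]: "cod\<^sub>C (\<pi>\<^sub>2 A B) = B"
  and dom_pair [simp]: "dom\<^sub>C f = dom\<^sub>C g \<Longrightarrow> dom\<^sub>C \<langle>f, g\<rangle> = dom\<^sub>C f"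
  and cod_pair [simp]: "dom\<^sub>C f = dom\<^sub>C g \<Longrightarrow> cod\<^sub>C \<langle>f, g\<rangle> = cod\<^sub>C f \<otimes> cod\<^sub>C g"
  and dom_bang [simp]: "dom\<^sub>C (c_bang C A) = A"
  and cod_bang [simp]: "cod\<^sub>C (c_bang C A) = c_term C"
  and p1_pair [simp]: "dom\<^sub>C f = dom\<^sub>C g \<Longrightarrow> cod\<^sub>C f = A \<Longrightarrow> cod\<^sub>C g = B \<Longrightarrow> \<pi>\<^sub>1 A B \<cdot> \<langle>f, g\<rangle> = f"
  and p2_pair [simp]: "dom\<^sub>C f = dom\<^sub>C g \<Longrightarrow> cod\<^sub>C f = A \<Longrightarrow> cod\<^sub>C g = B \<Longrightarrow> \<pi>\<^sub>2 A B \<cdot> \<langle>f, g\<rangle> = g"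
  and pair_p1_p2_comp [simp]: "cod\<^sub>C h = A \<otimes> B \<Longrightarrow> \<langle>\<pi>\<^sub>1 A B \<cdot> h, \<pi>\<^sub>2 A B \<cdot> h\<rangle> = h"
  using has_finite_products unfolding has_finite_products_def by auto

lemma pair_p1_p2 [simp]: "\<langle>\<pi>\<^sub>1 A B, \<pi>\<^sub>2 A B\<rangle> = c_id C (A \<otimes> B)"
  using pair_p1_p2_comp[of "c_id C (A \<otimes> B)" A B] by simp

lemma pair_comp [simp]:
  assumes "dom\<^sub>C f = dom\<^sub>C g" and "cod\<^sub>C k = dom\<^sub>C f"
  shows "\<langle>f, g\<rangle> \<cdot> k = \<langle>f \<cdot> k, g \<cdot> k\<rangle>"
  using pair_p1_p2_comp[of "\<langle>f, g\<rangle> \<cdot> k" "cod\<^sub>C f" "cod\<^sub>C g"] assms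
  by (simp flip: comp_assoc)

lemma dom_cross_r [simp]: "dom\<^sub>C (cross_r C f D) = dom\<^sub>C f \<otimes> D"
  and cod_cross_r [simp]: "cod\<^sub>C (cross_r C f D) = cod\<^sub>C f \<otimes> D"
  by (simp_all add: cross_r_def)

definition mid_swap :: "'o \<Rightarrow> 'o \<Rightarrow> 'o \<Rightarrow> 'm" where
  "mid_swap A1 A2 E =
     \<langle>\<langle>\<pi>\<^sub>1 A1 E \<cdot> \<pi>\<^sub>1 (A1 \<otimes> E) A2, \<pi>\<^sub>2 (A1 \<otimes> E) A2\<rangle>, \<pi>\<^sub>2 A1 E \<cdot> \<pi>\<^sub>1 (A1 \<otimes> E) A2\<rangle>"

lemma dom_mid_swap [simp]: "dom\<^sub>C (mid_swap A1 A2 E) = A1 \<otimes> E \<otimes> A2"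
  and cod_mid_swap [simp]: "cod\<^sub>C (mid_swap A1 A2 E) = A1 \<otimes> A2 \<otimes> E"
  by (simp_all add: mid_swap_def)

lemma mid_swap_mid_swap: "mid_swap A1 A2 E \<cdot> mid_swap A1 E A2 = c_id C (A1 \<otimes> A2 \<otimes> E)"
  by (simp add: mid_swap_def)

end

locale cartesian_doctrine = cartesian_category C
  for C :: "('o, 'm) cat" +
  fixes P :: "('o, 'm, 'p) doctr"
  assumes doctrine: "doctrine C P"
begin

abbreviation le :: "'p \<Rightarrow> 'o \<Rightarrow> 'p \<Rightarrow> bool" ("(_/ \<sqsubseteq>\<^bsub>_\<^esub>/ _)" [51, 0, 51] 50)
  where "x \<sqsubseteq>\<^bsub>A\<^esub> y \<equiv> ple P A x y"

lemma le_refl: "x \<in> Pc P A \<Longrightarrow> x \<sqsubseteq>\<^bsub>A\<^esub> x"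
  and le_trans: "\<lbrakk>x \<sqsubseteq>\<^bsub>A\<^esub> y; y \<sqsubseteq>\<^bsub>A\<^esub> z; x \<in> Pc P A; y \<in> Pc P A; z \<in> Pc P A\<rbrakk> \<Longrightarrow> x \<sqsubseteq>\<^bsub>A\<^esub> z"
  and pre_in_carrier [simp]: "\<lbrakk>x \<in> Pc P (cod\<^sub>C f); dom\<^sub>C f = A\<rbrakk> \<Longrightarrow> pre P f x \<in> Pc P A"
  and pre_id [simp]: "x \<in> Pc P A \<Longrightarrow> pre P (c_id C A) x = x"
  using doctrine unfolding doctrine_def by blast+

lemma pre_mono:
  "\<lbrakk>x \<sqsubseteq>\<^bsub>B\<^esub> y; x \<in> Pc P B; y \<in> Pc P B; cod\<^sub>C f = B; dom\<^sub>C f = A\<rbrakk> \<Longrightarrow> pre P f x \<sqsubseteq>\<^bsub>A\<^esub> pre P f y"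
  using doctrine unfolding doctrine_def by blast

lemma pre_pre [simp]: "\<lbrakk>cod\<^sub>C f = dom\<^sub>C g; x \<in> Pc P (cod\<^sub>C g)\<rbrakk> \<Longrightarrow> pre P f (pre P g x) = pre P (g \<cdot> f) x"
  using doctrine unfolding doctrine_def by (elim conjE) (simp only:)

lemma pre_le_pre_iff:
  assumes "s \<cdot> t = c_id C B" and "dom\<^sub>C s = A" and "cod\<^sub>C s = B" and "dom\<^sub>C t = B" and "cod\<^sub>C t = A"
    and "x \<in> Pc P B" and "y \<in> Pc P B"
  shows "pre P s x \<sqsubseteq>\<^bsub>A\<^esub> pre P s y \<longleftrightarrow> x \<sqsubseteq>\<^bsub>B\<^esub> y"
proof
  have retract: "pre P t (pre P s z) = z" if "z \<in> Pc P B" for z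
    using assms that by simp
  assume "pre P s x \<sqsubseteq>\<^bsub>A\<^esub> pre P s y"
  then have "pre P t (pre P s x) \<sqsubseteq>\<^bsub>B\<^esub> pre P t (pre P s y)"
    by (rule pre_mono) (use assms in simp_all)
  then show "x \<sqsubseteq>\<^bsub>B\<^esub> y"
    using assms by (simp only: retract)
qed (use assms in \<open>simp add: pre_mono\<close>)

lemma in_ex_carrier_iff [simp]: "(D, \<delta>) \<in> ex_carrier C P A \<longleftrightarrow> \<delta> \<in> Pc P (A \<otimes> D)"
  by (simp add: ex_carrier_def)

lemma ex_le_Pair_iff:
  "ex_le C P A (D, \<delta>) (D', \<delta>') \<longleftrightarrow>
     (\<exists>h. dom\<^sub>C h = A \<otimes> D \<and> cod\<^sub>C h = D' \<and> \<delta> \<sqsubseteq>\<^bsub>A \<otimes> D\<^esub> pre P \<langle>\<pi>\<^sub>1 A D, h\<rangle> \<delta>')"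
  by (simp add: ex_le_def)

lemma ex_re_Pair [simp]: "ex_re C P f (D, \<delta>) = (D, pre P (cross_r C f D) \<delta>)"
  by (simp add: ex_re_def)

lemma ex_re_in_carrier: "z \<in> ex_carrier C P (cod\<^sub>C f) \<Longrightarrow> ex_re C P f z \<in> ex_carrier C P (dom\<^sub>C f)"
  by (cases z) simp

lemma ex_le_refl:
  assumes "x \<in> ex_carrier C P A"
  shows "ex_le C P A x x"
proof -
  obtain D \<delta> where x: "x = (D, \<delta>)"
    by (cases x)
  have "\<delta> \<sqsubseteq>\<^bsub>A \<otimes> D\<^esub> pre P \<langle>\<pi>\<^sub>1 A D, \<pi>\<^sub>2 A D\<rangle> \<delta>"
    using assms x by (simp add: le_refl)
  then show ?thesis
    unfolding x ex_le_Pair_iff by (intro exI[of _ "\<pi>\<^sub>2 A D"]) simp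
qed

lemma ex_le_trans:
  assumes "x \<in> ex_carrier C P A" and "y \<in> ex_carrier C P A" and "z \<in> ex_carrier C P A"
    and "ex_le C P A x y" and "ex_le C P A y z"
  shows "ex_le C P A x z"
proof -
  obtain D1 \<delta>1 D2 \<delta>2 D3 \<delta>3 where xyz: "x = (D1, \<delta>1)" "y = (D2, \<delta>2)" "z = (D3, \<delta>3)"
    by (cases x, cases y, cases z)
  have \<delta>: "\<delta>1 \<in> Pc P (A \<otimes> D1)" "\<delta>2 \<in> Pc P (A \<otimes> D2)" "\<delta>3 \<in> Pc P (A \<otimes> D3)"
    using assms(1-3) xyz by auto
  obtain h1 where h1: "dom\<^sub>C h1 = A \<otimes> D1" "cod\<^sub>C h1 = D2"
    "\<delta>1 \<sqsubseteq>\<^bsub>A \<otimes> D1\<^esub> pre P \<langle>\<pi>\<^sub>1 A D1, h1\<rangle> \<delta>2"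
    using assms(4) unfolding xyz ex_le_Pair_iff by blast
  obtain h2 where h2: "dom\<^sub>C h2 = A \<otimes> D2" "cod\<^sub>C h2 = D3"
    "\<delta>2 \<sqsubseteq>\<^bsub>A \<otimes> D2\<^esub> pre P \<langle>\<pi>\<^sub>1 A D2, h2\<rangle> \<delta>3"
    using assms(5) unfolding xyz ex_le_Pair_iff by blast
  let ?g = "h2 \<cdot> \<langle>\<pi>\<^sub>1 A D1, h1\<rangle>"
  have "pre P \<langle>\<pi>\<^sub>1 A D1, h1\<rangle> \<delta>2 \<sqsubseteq>\<^bsub>A \<otimes> D1\<^esub> pre P \<langle>\<pi>\<^sub>1 A D1, h1\<rangle> (pre P \<langle>\<pi>\<^sub>1 A D2, h2\<rangle> \<delta>3)"
    by (rule pre_mono[OF h2(3)]) (use h1 h2 \<delta> in simp_all)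
  also have "pre P \<langle>\<pi>\<^sub>1 A D1, h1\<rangle> (pre P \<langle>\<pi>\<^sub>1 A D2, h2\<rangle> \<delta>3) = pre P \<langle>\<pi>\<^sub>1 A D1, ?g\<rangle> \<delta>3"
    using h1 h2 \<delta> by simp
  finally have "\<delta>1 \<sqsubseteq>\<^bsub>A \<otimes> D1\<^esub> pre P \<langle>\<pi>\<^sub>1 A D1, ?g\<rangle> \<delta>3"
    by (rule le_trans[OF h1(3)]) (use h1 h2 \<delta> in simp_all)
  then show ?thesis
    unfolding xyz ex_le_Pair_iff using h1 h2 by (intro exI[of _ ?g]) simp
qed

lemma ex_eq_refl: "x \<in> ex_carrier C P A \<Longrightarrow> ex_eq C P A x x"
  unfolding ex_eq_def by (simp add: ex_le_refl)

lemma ex_eq_sym: "ex_eq C P A x y \<Longrightarrow> ex_eq C P A y x"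
  unfolding ex_eq_def by simp

lemma ex_eq_trans:
  "\<lbrakk>x \<in> ex_carrier C P A; y \<in> ex_carrier C P A; z \<in> ex_carrier C P A;
    ex_eq C P A x y; ex_eq C P A y z\<rbrakk> \<Longrightarrow> ex_eq C P A x z"
  unfolding ex_eq_def by (meson ex_le_trans)

definition is_ex_exists :: "'m \<Rightarrow> 'o \<times> 'p \<Rightarrow> 'o \<times> 'p \<Rightarrow> bool" where
  "is_ex_exists m x y \<longleftrightarrow> y \<in> ex_carrier C P (cod\<^sub>C m) \<and>
     (\<forall>z\<in>ex_carrier C P (cod\<^sub>C m). ex_le C P (cod\<^sub>C m) y z \<longleftrightarrow> ex_le C P (dom\<^sub>C m) x (ex_re C P m z))"

definition is_ex_forall :: "'m \<Rightarrow> 'o \<times> 'p \<Rightarrow> 'o \<times> 'p \<Rightarrow> bool" where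
  "is_ex_forall m x y \<longleftrightarrow> y \<in> ex_carrier C P (cod\<^sub>C m) \<and>
     (\<forall>z\<in>ex_carrier C P (cod\<^sub>C m). ex_le C P (cod\<^sub>C m) z y \<longleftrightarrow> ex_le C P (dom\<^sub>C m) (ex_re C P m z) x)"

lemma ex_exists_eqI:
  assumes "is_ex_exists m x' y" and "ex_eq C P (dom\<^sub>C m) x x'"
    and "x \<in> ex_carrier C P (dom\<^sub>C m)" and "x' \<in> ex_carrier C P (dom\<^sub>C m)"
  shows "ex_exists C P m x \<in> ex_carrier C P (cod\<^sub>C m)"
    and "ex_eq C P (cod\<^sub>C m) (ex_exists C P m x) y"
proof -
  have "is_ex_exists m x y"
    using assms unfolding is_ex_exists_def ex_eq_def by (meson ex_le_trans ex_re_in_carrier)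
  then have "is_ex_exists m x (ex_exists C P m x)"
    unfolding is_ex_exists_def ex_exists_def by (rule someI)
  with \<open>is_ex_exists m x y\<close> show "ex_exists C P m x \<in> ex_carrier C P (cod\<^sub>C m)"
    and "ex_eq C P (cod\<^sub>C m) (ex_exists C P m x) y"
    unfolding is_ex_exists_def ex_eq_def by (meson ex_le_refl)+
qed

lemma ex_forall_eqI:
  assumes "is_ex_forall m x' y" and "ex_eq C P (dom\<^sub>C m) x x'"
    and "x \<in> ex_carrier C P (dom\<^sub>C m)" and "x' \<in> ex_carrier C P (dom\<^sub>C m)"
  shows "ex_forall C P m x \<in> ex_carrier C P (cod\<^sub>C m)"
    and "ex_eq C P (cod\<^sub>C m) (ex_forall C P m x) y"
proof -
  have "is_ex_forall m x y"
    using assms unfolding is_ex_forall_def ex_eq_def by (meson ex_le_trans ex_re_in_carrier)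
  then have "is_ex_forall m x (ex_forall C P m x)"
    unfolding is_ex_forall_def ex_forall_def by (rule someI)
  with \<open>is_ex_forall m x y\<close> show "ex_forall C P m x \<in> ex_carrier C P (cod\<^sub>C m)"
    and "ex_eq C P (cod\<^sub>C m) (ex_forall C P m x) y"
    unfolding is_ex_forall_def ex_eq_def by (meson ex_le_refl)+
qed

lemma ex_le_eta_iff:
  assumes "\<phi> \<in> Pc P A"
  shows "ex_le C P A (D, \<zeta>) (ex_eta C P A \<phi>) \<longleftrightarrow> \<zeta> \<sqsubseteq>\<^bsub>A \<otimes> D\<^esub> pre P (\<pi>\<^sub>1 A D) \<phi>"
  unfolding ex_eta_def ex_le_Pair_iff
proof
  show "\<exists>h. dom\<^sub>C h = A \<otimes> D \<and> cod\<^sub>C h = c_term C \<and>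
      \<zeta> \<sqsubseteq>\<^bsub>A \<otimes> D\<^esub> pre P \<langle>\<pi>\<^sub>1 A D, h\<rangle> (pre P (\<pi>\<^sub>1 A (c_term C)) \<phi>)"
    if "\<zeta> \<sqsubseteq>\<^bsub>A \<otimes> D\<^esub> pre P (\<pi>\<^sub>1 A D) \<phi>"
    using that assms by (intro exI[of _ "c_bang C (A \<otimes> D)"]) simp
qed (use assms in auto)

lemma ex_eta_in_carrier [simp]: "\<phi> \<in> Pc P A \<Longrightarrow> ex_eta C P A \<phi> \<in> ex_carrier C P A"
  by (simp add: ex_eta_def)

lemma is_ex_exists_eta:
  assumes \<alpha>: "\<alpha> \<in> Pc P (A \<otimes> B)"
  shows "is_ex_exists (\<pi>\<^sub>1 A B) (ex_eta C P (A \<otimes> B) \<alpha>) (B, \<alpha>)"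
  unfolding is_ex_exists_def
proof (simp add: \<alpha>, intro ballI)
  fix z
  assume "z \<in> ex_carrier C P A"
  then obtain D \<zeta> where z: "z = (D, \<zeta>)" and \<zeta>: "\<zeta> \<in> Pc P (A \<otimes> D)"
    by (cases z) simp
  let ?X = "A \<otimes> B" and ?T = "c_term C"
  show "ex_le C P A (B, \<alpha>) z = ex_le C P ?X (ex_eta C P ?X \<alpha>) (ex_re C P (\<pi>\<^sub>1 A B) z)"
  proof
    assume "ex_le C P A (B, \<alpha>) z"
    then obtain h where h: "dom\<^sub>C h = ?X" "cod\<^sub>C h = D" "\<alpha> \<sqsubseteq>\<^bsub>?X\<^esub> pre P \<langle>\<pi>\<^sub>1 A B, h\<rangle> \<zeta>"
      unfolding z ex_le_Pair_iff by blast
    have "pre P (\<pi>\<^sub>1 ?X ?T) \<alpha> \<sqsubseteq>\<^bsub>?X \<otimes> ?T\<^esub> pre P (\<pi>\<^sub>1 ?X ?T) (pre P \<langle>\<pi>\<^sub>1 A B, h\<rangle> \<zeta>)"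
      by (rule pre_mono[OF h(3)]) (use h \<alpha> \<zeta> in simp_all)
    then show "ex_le C P ?X (ex_eta C P ?X \<alpha>) (ex_re C P (\<pi>\<^sub>1 A B) z)"
      unfolding z ex_eta_def ex_re_Pair ex_le_Pair_iff using h \<alpha> \<zeta>
      by (intro exI[of _ "h \<cdot> \<pi>\<^sub>1 ?X ?T"]) (simp add: cross_r_def)
  next
    assume "ex_le C P ?X (ex_eta C P ?X \<alpha>) (ex_re C P (\<pi>\<^sub>1 A B) z)"
    then obtain h where h: "dom\<^sub>C h = ?X \<otimes> ?T" "cod\<^sub>C h = D"
      "pre P (\<pi>\<^sub>1 ?X ?T) \<alpha> \<sqsubseteq>\<^bsub>?X \<otimes> ?T\<^esub> pre P \<langle>\<pi>\<^sub>1 ?X ?T, h\<rangle> (pre P (cross_r C (\<pi>\<^sub>1 A B) D) \<zeta>)"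
      unfolding z ex_eta_def ex_re_Pair ex_le_Pair_iff by auto
    let ?j = "\<langle>c_id C ?X, c_bang C ?X\<rangle>"
    have "pre P ?j (pre P (\<pi>\<^sub>1 ?X ?T) \<alpha>) \<sqsubseteq>\<^bsub>?X\<^esub> pre P ?j (pre P \<langle>\<pi>\<^sub>1 ?X ?T, h\<rangle> (pre P (cross_r C (\<pi>\<^sub>1 A B) D) \<zeta>))"
      by (rule pre_mono[OF h(3)]) (use h \<alpha> \<zeta> in \<open>simp_all add: cross_r_def\<close>)
    then show "ex_le C P A (B, \<alpha>) z"
      unfolding z ex_le_Pair_iff using h \<alpha> \<zeta>
      by (intro exI[of _ "h \<cdot> ?j"]) (simp add: cross_r_def)
  qed
qed

end

locale universal_doctrine = cartesian_doctrine C P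
  for C :: "('o, 'm) cat" and P :: "('o, 'm, 'p) doctr" +
  assumes universal: "universal C P"
begin

lemma forall_right_adjoint: "\<beta> \<in> Pc P (A \<otimes> D) \<Longrightarrow> P_radj C P (\<pi>\<^sub>1 A D) \<beta> (P_forall C P (\<pi>\<^sub>1 A D) \<beta>)"
  using universal unfolding universal_def P_forall_def by (meson someI_ex)

lemma forall_in_carrier [simp]: "\<beta> \<in> Pc P (A \<otimes> D) \<Longrightarrow> P_forall C P (\<pi>\<^sub>1 A D) \<beta> \<in> Pc P A"
  using forall_right_adjoint unfolding P_radj_def by simp

lemma le_forall_iff:
  "\<lbrakk>\<beta> \<in> Pc P (A \<otimes> D); \<delta> \<in> Pc P A\<rbrakk> \<Longrightarrow>
     \<delta> \<sqsubseteq>\<^bsub>A\<^esub> P_forall C P (\<pi>\<^sub>1 A D) \<beta> \<longleftrightarrow> pre P (\<pi>\<^sub>1 A D) \<delta> \<sqsubseteq>\<^bsub>A \<otimes> D\<^esub> \<beta>"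
  using forall_right_adjoint unfolding P_radj_def by simp

lemma forall_Beck_Chevalley:
  "\<beta> \<in> Pc P (cod\<^sub>C f \<otimes> D) \<Longrightarrow>
     pre P f (P_forall C P (\<pi>\<^sub>1 (cod\<^sub>C f) D) \<beta>) = P_forall C P (\<pi>\<^sub>1 (dom\<^sub>C f) D) (pre P (cross_r C f D) \<beta>)"
  using universal unfolding universal_def by blast

lemma le_pre_forall_iff:
  assumes "\<beta> \<in> Pc P (cod\<^sub>C f \<otimes> D)" and "\<delta> \<in> Pc P (dom\<^sub>C f)"
  shows "\<delta> \<sqsubseteq>\<^bsub>dom\<^sub>C f\<^esub> pre P f (P_forall C P (\<pi>\<^sub>1 (cod\<^sub>C f) D) \<beta>) \<longleftrightarrow>
    pre P (\<pi>\<^sub>1 (dom\<^sub>C f) D) \<delta> \<sqsubseteq>\<^bsub>dom\<^sub>C f \<otimes> D\<^esub> pre P (cross_r C f D) \<beta>"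
  using assms by (simp add: forall_Beck_Chevalley le_forall_iff)

lemma is_ex_forall_eta_mid_proj:
  assumes \<beta>: "\<beta> \<in> Pc P (A1 \<otimes> A2 \<otimes> E)"
  shows "is_ex_forall \<langle>\<pi>\<^sub>1 A1 A2 \<cdot> \<pi>\<^sub>1 (A1 \<otimes> A2) E, \<pi>\<^sub>2 (A1 \<otimes> A2) E\<rangle> (ex_eta C P (A1 \<otimes> A2 \<otimes> E) \<beta>)
           (ex_eta C P (A1 \<otimes> E) (P_forall C P (\<pi>\<^sub>1 (A1 \<otimes> E) A2) (pre P (mid_swap A1 A2 E) \<beta>)))"
    (is "is_ex_forall ?m (ex_eta C P ?Y \<beta>) (ex_eta C P ?U ?\<phi>)")
  unfolding is_ex_forall_def
proof (simp add: \<beta>, intro ballI)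
  fix z
  assume "z \<in> ex_carrier C P ?U"
  then obtain D \<zeta> where z: "z = (D, \<zeta>)" and \<zeta>: "\<zeta> \<in> Pc P (?U \<otimes> D)"
    by (cases z) simp
  let ?W = "?U \<otimes> D" and ?y = "\<pi>\<^sub>1 ?Y D"
  let ?w = "\<pi>\<^sub>1 ?W A2"
  define \<rho> where "\<rho> = \<langle>\<langle>\<langle>\<pi>\<^sub>1 A1 A2 \<cdot> \<pi>\<^sub>1 (A1 \<otimes> A2) E \<cdot> ?y, \<pi>\<^sub>2 (A1 \<otimes> A2) E \<cdot> ?y\<rangle>, \<pi>\<^sub>2 ?Y D\<rangle>,
    \<pi>\<^sub>2 A1 A2 \<cdot> \<pi>\<^sub>1 (A1 \<otimes> A2) E \<cdot> ?y\<rangle>"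
  define \<rho>' where "\<rho>' = \<langle>\<langle>\<langle>\<pi>\<^sub>1 A1 E \<cdot> \<pi>\<^sub>1 ?U D \<cdot> ?w, \<pi>\<^sub>2 ?W A2\<rangle>, \<pi>\<^sub>2 A1 E \<cdot> \<pi>\<^sub>1 ?U D \<cdot> ?w\<rangle>, \<pi>\<^sub>2 ?U D \<cdot> ?w\<rangle>"
  have \<rho>: "dom\<^sub>C \<rho> = ?Y \<otimes> D" "cod\<^sub>C \<rho> = ?W \<otimes> A2" "dom\<^sub>C \<rho>' = ?W \<otimes> A2" "cod\<^sub>C \<rho>' = ?Y \<otimes> D"
    "\<rho> \<cdot> \<rho>' = c_id C (?W \<otimes> A2)"
    by (simp_all add: \<rho>_def \<rho>'_def)
  have \<rho>_comp: "?w \<cdot> \<rho> = cross_r C ?m D" "mid_swap A1 A2 E \<cdot> cross_r C (\<pi>\<^sub>1 ?U D) A2 \<cdot> \<rho> = ?y"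
    by (simp_all add: \<rho>_def cross_r_def mid_swap_def)
  have "ex_le C P ?U z (ex_eta C P ?U ?\<phi>) \<longleftrightarrow> \<zeta> \<sqsubseteq>\<^bsub>?W\<^esub> pre P (\<pi>\<^sub>1 ?U D) ?\<phi>"
    unfolding z using \<beta> by (simp add: ex_le_eta_iff)
  also have "\<dots> \<longleftrightarrow> pre P ?w \<zeta> \<sqsubseteq>\<^bsub>?W \<otimes> A2\<^esub> pre P (cross_r C (\<pi>\<^sub>1 ?U D) A2) (pre P (mid_swap A1 A2 E) \<beta>)"
    using le_pre_forall_iff[of _ "\<pi>\<^sub>1 ?U D" A2 \<zeta>] \<beta> \<zeta> by simp
  also have "\<dots> \<longleftrightarrow> pre P \<rho> (pre P ?w \<zeta>) \<sqsubseteq>\<^bsub>?Y \<otimes> D\<^esub>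
      pre P \<rho> (pre P (cross_r C (\<pi>\<^sub>1 ?U D) A2) (pre P (mid_swap A1 A2 E) \<beta>))"
    using \<beta> \<zeta> by (intro pre_le_pre_iff[symmetric, OF \<rho>(5,1-4)]) simp_all
  also have "\<dots> \<longleftrightarrow> pre P (cross_r C ?m D) \<zeta> \<sqsubseteq>\<^bsub>?Y \<otimes> D\<^esub> pre P ?y \<beta>"
    using \<beta> \<zeta> \<rho> by (simp flip: \<rho>_comp)
  also have "\<dots> \<longleftrightarrow> ex_le C P ?Y (ex_re C P ?m z) (ex_eta C P ?Y \<beta>)"
    unfolding z using \<beta> by (simp add: ex_le_eta_iff)
  finally show "ex_le C P ?U z (ex_eta C P ?U ?\<phi>) \<longleftrightarrow> ex_le C P ?Y (ex_re C P ?m z) (ex_eta C P ?Y \<beta>)" .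
qed

end

locale universal_doctrine_with_exponents = universal_doctrine C P
  for C :: "('o, 'm) cat" and P :: "('o, 'm, 'p) doctr" +
  assumes has_exponents: "has_exponents C"
begin

lemma dom_ev [simp]: "dom\<^sub>C (c_ev C A B) = A \<otimes> c_exp C A B"
  and cod_ev [simp]: "cod\<^sub>C (c_ev C A B) = B"
  using has_exponents unfolding has_exponents_def by auto

definition uncurry_mid :: "'o \<Rightarrow> 'o \<Rightarrow> 'o \<Rightarrow> 'o \<Rightarrow> 'm \<Rightarrow> 'm" where
  "uncurry_mid A1 A2 B D k = c_ev C A2 B \<cdot> \<langle>\<pi>\<^sub>2 A1 A2 \<cdot> \<pi>\<^sub>1 (A1 \<otimes> A2) D, k \<cdot> cross_r C (\<pi>\<^sub>1 A1 A2) D\<rangle>"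

lemma dom_uncurry_mid [simp]:
  "\<lbrakk>dom\<^sub>C k = A1 \<otimes> D; cod\<^sub>C k = c_exp C A2 B\<rbrakk> \<Longrightarrow> dom\<^sub>C (uncurry_mid A1 A2 B D k) = A1 \<otimes> A2 \<otimes> D"
  and cod_uncurry_mid [simp]:
  "\<lbrakk>dom\<^sub>C k = A1 \<otimes> D; cod\<^sub>C k = c_exp C A2 B\<rbrakk> \<Longrightarrow> cod\<^sub>C (uncurry_mid A1 A2 B D k) = B"
  by (simp_all add: uncurry_mid_def cross_r_def)

lemma exists_uncurry_mid:
  assumes h: "dom\<^sub>C h = A1 \<otimes> A2 \<otimes> D" "cod\<^sub>C h = B"
  shows "\<exists>k. dom\<^sub>C k = A1 \<otimes> D \<and> cod\<^sub>C k = c_exp C A2 B \<and> h = uncurry_mid A1 A2 B D k"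
proof -
  let ?W = "A1 \<otimes> D" and ?A = "A1 \<otimes> A2"
  define \<tau> where "\<tau> = \<langle>\<langle>\<pi>\<^sub>1 A1 D \<cdot> \<pi>\<^sub>2 A2 ?W, \<pi>\<^sub>1 A2 ?W\<rangle>, \<pi>\<^sub>2 A1 D \<cdot> \<pi>\<^sub>2 A2 ?W\<rangle>"
  define \<sigma> where "\<sigma> = \<langle>\<pi>\<^sub>2 A1 A2 \<cdot> \<pi>\<^sub>1 ?A D, cross_r C (\<pi>\<^sub>1 A1 A2) D\<rangle>"
  have \<tau>: "dom\<^sub>C \<tau> = A2 \<otimes> ?W" "cod\<^sub>C \<tau> = ?A \<otimes> D"
    by (simp_all add: \<tau>_def)
  have \<sigma>: "dom\<^sub>C \<sigma> = ?A \<otimes> D" "cod\<^sub>C \<sigma> = A2 \<otimes> ?W" "\<tau> \<cdot> \<sigma> = c_id C (?A \<otimes> D)"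
    by (simp_all add: \<sigma>_def \<tau>_def cross_r_def)
  have "dom\<^sub>C (h \<cdot> \<tau>) = A2 \<otimes> ?W" "cod\<^sub>C (h \<cdot> \<tau>) = B"
    using h \<tau> by simp_all
  then obtain k where k: "dom\<^sub>C k = ?W" "cod\<^sub>C k = c_exp C A2 B"
    and transpose: "c_ev C A2 B \<cdot> \<langle>\<pi>\<^sub>1 A2 ?W, k \<cdot> \<pi>\<^sub>2 A2 ?W\<rangle> = h \<cdot> \<tau>"
    using has_exponents unfolding has_exponents_def by blast
  have "h = (h \<cdot> \<tau>) \<cdot> \<sigma>"
    using h \<tau> \<sigma> by simp
  also have "\<dots> = uncurry_mid A1 A2 B D k"
    unfolding transpose[symmetric] using k by (simp add: uncurry_mid_def \<sigma>_def cross_r_def)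
  finally show ?thesis
    using k by blast
qed

lemma ex_uncurry_mid_iff:
  "(\<exists>h. dom\<^sub>C h = A1 \<otimes> A2 \<otimes> D \<and> cod\<^sub>C h = B \<and> Q h) \<longleftrightarrow>
     (\<exists>k. dom\<^sub>C k = A1 \<otimes> D \<and> cod\<^sub>C k = c_exp C A2 B \<and> Q (uncurry_mid A1 A2 B D k))"
  by (metis exists_uncurry_mid dom_uncurry_mid cod_uncurry_mid)

text \<open>((a1, a2), f) \<mapsto> ((a1, a2), f a2), the morphism g of the theorem\<close>

definition ev_subst :: "'o \<Rightarrow> 'o \<Rightarrow> 'o \<Rightarrow> 'm" where
  "ev_subst A1 A2 B =
     \<langle>\<langle>\<pi>\<^sub>1 A1 A2 \<cdot> \<pi>\<^sub>1 (A1 \<otimes> A2) (c_exp C A2 B), \<pi>\<^sub>2 A1 A2 \<cdot> \<pi>\<^sub>1 (A1 \<otimes> A2) (c_exp C A2 B)\<rangle>,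
      c_ev C A2 B \<cdot> \<langle>\<pi>\<^sub>2 A1 A2 \<cdot> \<pi>\<^sub>1 (A1 \<otimes> A2) (c_exp C A2 B), \<pi>\<^sub>2 (A1 \<otimes> A2) (c_exp C A2 B)\<rangle>\<rangle>"

lemma dom_ev_subst [simp]: "dom\<^sub>C (ev_subst A1 A2 B) = A1 \<otimes> A2 \<otimes> c_exp C A2 B"
  and cod_ev_subst [simp]: "cod\<^sub>C (ev_subst A1 A2 B) = A1 \<otimes> A2 \<otimes> B"
  by (simp_all add: ev_subst_def)

text \<open>\<Phi>(a1, f) = \<forall>a2. \<alpha>((a1, a2), f a2)\<close>

definition skolem :: "'o \<Rightarrow> 'o \<Rightarrow> 'o \<Rightarrow> 'p \<Rightarrow> 'p" where
  "skolem A1 A2 B \<alpha> = P_forall C P (\<pi>\<^sub>1 (A1 \<otimes> c_exp C A2 B) A2)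
     (pre P (ev_subst A1 A2 B \<cdot> mid_swap A1 A2 (c_exp C A2 B)) \<alpha>)"

lemma skolem_in_carrier [simp]:
  "\<alpha> \<in> Pc P (A1 \<otimes> A2 \<otimes> B) \<Longrightarrow> skolem A1 A2 B \<alpha> \<in> Pc P (A1 \<otimes> c_exp C A2 B)"
  by (simp add: skolem_def)

lemma le_pre_skolem_iff:
  assumes \<alpha>: "\<alpha> \<in> Pc P (A1 \<otimes> A2 \<otimes> B)" and \<zeta>: "\<zeta> \<in> Pc P (A1 \<otimes> D)"
    and k: "dom\<^sub>C k = A1 \<otimes> D" "cod\<^sub>C k = c_exp C A2 B"
  shows "\<zeta> \<sqsubseteq>\<^bsub>A1 \<otimes> D\<^esub> pre P \<langle>\<pi>\<^sub>1 A1 D, k\<rangle> (skolem A1 A2 B \<alpha>) \<longleftrightarrow>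
    pre P (cross_r C (\<pi>\<^sub>1 A1 A2) D) \<zeta> \<sqsubseteq>\<^bsub>A1 \<otimes> A2 \<otimes> D\<^esub>
      pre P \<langle>\<pi>\<^sub>1 (A1 \<otimes> A2) D, uncurry_mid A1 A2 B D k\<rangle> \<alpha>"
proof -
  let ?E = "c_exp C A2 B" and ?W = "A1 \<otimes> D" and ?f = "\<langle>\<pi>\<^sub>1 A1 D, k\<rangle>"
  let ?G = "ev_subst A1 A2 B \<cdot> mid_swap A1 A2 ?E" and ?\<sigma> = "mid_swap A1 D A2"
  have \<sigma>_comp: "\<pi>\<^sub>1 ?W A2 \<cdot> ?\<sigma> = cross_r C (\<pi>\<^sub>1 A1 A2) D"
    "?G \<cdot> cross_r C ?f A2 \<cdot> ?\<sigma> = \<langle>\<pi>\<^sub>1 (A1 \<otimes> A2) D, uncurry_mid A1 A2 B D k\<rangle>"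
    using k by (simp_all add: mid_swap_def cross_r_def ev_subst_def uncurry_mid_def)
  have "\<zeta> \<sqsubseteq>\<^bsub>?W\<^esub> pre P ?f (skolem A1 A2 B \<alpha>) \<longleftrightarrow>
      pre P (\<pi>\<^sub>1 ?W A2) \<zeta> \<sqsubseteq>\<^bsub>?W \<otimes> A2\<^esub> pre P (cross_r C ?f A2) (pre P ?G \<alpha>)"
    using le_pre_forall_iff[of _ ?f A2 \<zeta>] \<alpha> \<zeta> k unfolding skolem_def by simp
  also have "\<dots> \<longleftrightarrow> pre P ?\<sigma> (pre P (\<pi>\<^sub>1 ?W A2) \<zeta>) \<sqsubseteq>\<^bsub>A1 \<otimes> A2 \<otimes> D\<^esub>
      pre P ?\<sigma> (pre P (cross_r C ?f A2) (pre P ?G \<alpha>))"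
    using \<alpha> \<zeta> k by (intro pre_le_pre_iff[symmetric, OF mid_swap_mid_swap]) simp_all
  also have "\<dots> \<longleftrightarrow> pre P (cross_r C (\<pi>\<^sub>1 A1 A2) D) \<zeta> \<sqsubseteq>\<^bsub>A1 \<otimes> A2 \<otimes> D\<^esub>
      pre P \<langle>\<pi>\<^sub>1 (A1 \<otimes> A2) D, uncurry_mid A1 A2 B D k\<rangle> \<alpha>"
    using \<alpha> \<zeta> k by (simp flip: \<sigma>_comp)
  finally show ?thesis .
qed

lemma is_ex_forall_skolem:
  assumes \<alpha>: "\<alpha> \<in> Pc P (A1 \<otimes> A2 \<otimes> B)"
  shows "is_ex_forall (\<pi>\<^sub>1 A1 A2) (B, \<alpha>) (c_exp C A2 B, skolem A1 A2 B \<alpha>)"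
  unfolding is_ex_forall_def
proof (simp add: \<alpha>, intro ballI)
  fix z
  assume "z \<in> ex_carrier C P A1"
  then obtain D \<zeta> where z: "z = (D, \<zeta>)" and \<zeta>: "\<zeta> \<in> Pc P (A1 \<otimes> D)"
    by (cases z) simp
  let ?E = "c_exp C A2 B" and ?A = "A1 \<otimes> A2" and ?\<zeta>' = "pre P (cross_r C (\<pi>\<^sub>1 A1 A2) D) \<zeta>"
  have "ex_le C P A1 z (?E, skolem A1 A2 B \<alpha>) \<longleftrightarrow>
      (\<exists>k. dom\<^sub>C k = A1 \<otimes> D \<and> cod\<^sub>C k = ?E \<and>
        \<zeta> \<sqsubseteq>\<^bsub>A1 \<otimes> D\<^esub> pre P \<langle>\<pi>\<^sub>1 A1 D, k\<rangle> (skolem A1 A2 B \<alpha>))"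
    unfolding z ex_le_Pair_iff ..
  also have "\<dots> \<longleftrightarrow> (\<exists>k. dom\<^sub>C k = A1 \<otimes> D \<and> cod\<^sub>C k = ?E \<and>
      ?\<zeta>' \<sqsubseteq>\<^bsub>?A \<otimes> D\<^esub> pre P \<langle>\<pi>\<^sub>1 ?A D, uncurry_mid A1 A2 B D k\<rangle> \<alpha>)"
    using le_pre_skolem_iff[OF \<alpha> \<zeta>] by blast
  also have "\<dots> \<longleftrightarrow> (\<exists>h. dom\<^sub>C h = ?A \<otimes> D \<and> cod\<^sub>C h = B \<and> ?\<zeta>' \<sqsubseteq>\<^bsub>?A \<otimes> D\<^esub> pre P \<langle>\<pi>\<^sub>1 ?A D, h\<rangle> \<alpha>)"
    by (rule ex_uncurry_mid_iff[symmetric])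
  also have "\<dots> \<longleftrightarrow> ex_le C P ?A (ex_re C P (\<pi>\<^sub>1 A1 A2) z) (B, \<alpha>)"
    unfolding z ex_re_Pair ex_le_Pair_iff by simp
  finally show "ex_le C P A1 z (?E, skolem A1 A2 B \<alpha>) \<longleftrightarrow> ex_le C P ?A (ex_re C P (\<pi>\<^sub>1 A1 A2) z) (B, \<alpha>)" .
qed

end

theorem theorem12:
  fixes C :: "('o, 'm) cat" and P :: "('o, 'm, 'p) doctr"
    and A1 A2 B :: 'o and \<alpha> :: 'p
  assumes "is_category C" and "has_finite_products C" and "has_exponents C"
    and "doctrine C P" and "universal C P"
    and "\<alpha> \<in> Pc P (c_prod C (c_prod C A1 A2) B)"
  shows
    "let X = c_prod C (c_prod C A1 A2) B;
         E = c_exp C A2 B;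
         Y = c_prod C (c_prod C A1 A2) E;
         q1 = c_comp C (c_p1 C A1 A2) (c_p1 C (c_prod C A1 A2) E);
         q2 = c_comp C (c_p2 C A1 A2) (c_p1 C (c_prod C A1 A2) E);
         q3 = c_p2 C (c_prod C A1 A2) E;
         g = c_pair C (c_pair C q1 q2) (c_comp C (c_ev C A2 B) (c_pair C q2 q3));
         lhs = ex_forall C P (c_p1 C A1 A2)
                 (ex_exists C P (c_p1 C (c_prod C A1 A2) B) (ex_eta C P X \<alpha>));
         rhs = ex_exists C P (c_p1 C A1 E)
                 (ex_forall C P (c_pair C q1 q3) (ex_eta C P Y (pre P g \<alpha>)))
     in ex_eq C P A1 lhs rhs"
proof -
  interpret universal_doctrine_with_exponents C P
    using assms(1-5) by unfold_locales
  have \<alpha>: "\<alpha> \<in> Pc P (A1 \<otimes> A2 \<otimes> B)"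
    by fact
  let ?E = "c_exp C A2 B" and ?A = "A1 \<otimes> A2"
  let ?m = "\<langle>\<pi>\<^sub>1 A1 A2 \<cdot> \<pi>\<^sub>1 ?A ?E, \<pi>\<^sub>2 ?A ?E\<rangle>"
  let ?sk = "skolem A1 A2 B \<alpha>"
  let ?lhs_inner = "ex_exists C P (\<pi>\<^sub>1 ?A B) (ex_eta C P (?A \<otimes> B) \<alpha>)"
  let ?rhs_inner = "ex_forall C P ?m (ex_eta C P (?A \<otimes> ?E) (pre P (ev_subst A1 A2 B) \<alpha>))"
  have lhs_inner: "?lhs_inner \<in> ex_carrier C P ?A" "ex_eq C P ?A ?lhs_inner (B, \<alpha>)"
    using ex_exists_eqI[OF is_ex_exists_eta] \<alpha> by (simp_all add: ex_eq_refl)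
  have lhs: "ex_forall C P (\<pi>\<^sub>1 A1 A2) ?lhs_inner \<in> ex_carrier C P A1"
    "ex_eq C P A1 (ex_forall C P (\<pi>\<^sub>1 A1 A2) ?lhs_inner) (?E, ?sk)"
    using ex_forall_eqI[OF is_ex_forall_skolem[OF \<alpha>], where x = ?lhs_inner] lhs_inner \<alpha> by simp_all
  have mid: "is_ex_forall ?m (ex_eta C P (?A \<otimes> ?E) (pre P (ev_subst A1 A2 B) \<alpha>)) (ex_eta C P (A1 \<otimes> ?E) ?sk)"
    using is_ex_forall_eta_mid_proj[of "pre P (ev_subst A1 A2 B) \<alpha>" A1 A2 ?E] \<alpha> by (simp add: skolem_def)
  have rhs_inner: "?rhs_inner \<in> ex_carrier C P (A1 \<otimes> ?E)"
    "ex_eq C P (A1 \<otimes> ?E) ?rhs_inner (ex_eta C P (A1 \<otimes> ?E) ?sk)"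
    using ex_forall_eqI[OF mid, where x = "ex_eta C P (?A \<otimes> ?E) (pre P (ev_subst A1 A2 B) \<alpha>)"] \<alpha>
    by (simp_all add: ex_eq_refl)
  have rhs: "ex_exists C P (\<pi>\<^sub>1 A1 ?E) ?rhs_inner \<in> ex_carrier C P A1"
    "ex_eq C P A1 (ex_exists C P (\<pi>\<^sub>1 A1 ?E) ?rhs_inner) (?E, ?sk)"
    using ex_exists_eqI[OF is_ex_exists_eta[of ?sk A1 ?E], where x = ?rhs_inner] rhs_inner \<alpha> by simp_all
  show ?thesis
    using ex_eq_trans[OF lhs(1) _ rhs(1) lhs(2) ex_eq_sym[OF rhs(2)]] \<alpha>
    unfolding Let_def ev_subst_def by simp
qed

end
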